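(* Let $X,Y,Z\in\mathbb{Z}[i]$ satisfy $X^2+Y^2=Z^2$, $\gcd(X,Y)\in U$, $XYZ\neq 0$, with $X,Z\in O^I$ and $Y\in (1+i)^2G$ (i.e. $Y=(1+i)^{2}W$ with $W\in G$). Then there exist an integer $t$ with $0\le t\le 3$ and $P,Q\in G$ with $\gcd(P,Q)=1$ and $PQ\equiv 0 \pmod{1+i}$ such that $$X=i^{t+1}\big(P^2-(-1)^tQ^2\big),\quad Y=(1+i)^2PQ,\quad Z=i^{t+1}\big(P^2+(-1)^tQ^2\big).$$
   Context: $\mathbb{Z}[i]$ is the ring of Gaussian integers, $U=\{1,-1,i,-i\}$ its unit group; $R(\alpha),I(\alpha)$ are real and imaginary parts. $\gcd(x,y)\in U$ means $x,y$ have no common non-unit divisor; for $P,Q\in G$, $\gcd(P,Q)=1$ means $P,Q$ have no common prime factor. $O=\{\alpha: R(\alpha)+I(\alpha)\equiv1\pmod 2\}$, $O^I=\{\alpha\in O: R(\alpha)\equiv 1\pmod 4\}$. $G$ is the set of Gaussian integers of the form $(1+i)^{a_1}p_2^{a_2}\cdots p_m^{a_m}$ with integers $a_j\ge 0$ and $p_2,\dots,p_m$ distinct Gaussian primes lying in $O^I$ (the empty product $1$ included). *)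

theory Defs
  imports Complex_Main
begin

definition gauss_int :: "complex set" where
  "gauss_int = {z. Re z \<in> \<int> \<and> Im z \<in> \<int>}"

definition gdvd :: "complex \<Rightarrow> complex \<Rightarrow> bool" (infix "gdvd" 50) where
  "a gdvd b \<longleftrightarrow> (\<exists>c\<in>gauss_int. b = a * c)"

definition gunits :: "complex set" where
  "gunits = {1, -1, \<i>, -\<i>}"

definition gauss_prime :: "complex \<Rightarrow> bool" where
  "gauss_prime p \<longleftrightarrow> p \<in> gauss_int \<and> p \<noteq> 0 \<and> p \<notin> gunits \<and>
     (\<forall>a\<in>gauss_int. \<forall>b\<in>gauss_int. p gdvd (a * b) \<longrightarrow> p gdvd a \<or> p gdvd b)"

definition gcd_unit :: "complex \<Rightarrow> complex \<Rightarrow> bool" where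
  "gcd_unit x y \<longleftrightarrow> (\<forall>d\<in>gauss_int. d gdvd x \<and> d gdvd y \<longrightarrow> d \<in> gunits)"

definition gO :: "complex set" where
  "gO = {z \<in> gauss_int. (\<lfloor>Re z\<rfloor> + \<lfloor>Im z\<rfloor>) mod 2 = 1}"

definition gOI :: "complex set" where
  "gOI = {z \<in> gO. \<lfloor>Re z\<rfloor> mod 4 = 1}"

definition gG :: "complex set" where
  "gG = {z. \<exists>(a::nat) (S::complex set) (e::complex \<Rightarrow> nat).
            finite S \<and> (\<forall>p\<in>S. gauss_prime p \<and> p \<in> gOI) \<and>
            z = (1 + \<i>) ^ a * (\<Prod>p\<in>S. p ^ e p)}"

definition coprime_G :: "complex \<Rightarrow> complex \<Rightarrow> bool" where
  "coprime_G P Q \<longleftrightarrow> \<not> (\<exists>p. gauss_prime p \<and> p gdvd P \<and> p gdvd Q)"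

end

theory Submission
  imports Defs
begin

text \<open>
  Since \<open>X, Z \<in> O\<^sup>I\<close>, the Gaussian integers \<open>x = (Z + X)/2\<close> and \<open>y = (Z - X)/2\<close> exist,
  and \<open>X\<^sup>2 + Y\<^sup>2 = Z\<^sup>2\<close> with \<open>Y = (1+i)\<^sup>2 W = 2iW\<close> becomes \<open>x y = -W\<^sup>2\<close>. A prime dividing
  \<open>x\<close> and \<open>y\<close> would divide \<open>X\<close> and \<open>Y\<close>, so \<open>x\<close> and \<open>y\<close> are coprime. The prime factors of
  \<open>W \<in> G\<close> are pairwise non-associate, so grouping them by whether they divide \<open>x\<close> gives
  \<open>W = P Q\<close> with \<open>x = r P\<^sup>2\<close>, \<open>y = s Q\<^sup>2\<close>, \<open>r s = -1\<close>; the four choices of the unit \<open>r\<close> give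
  the four values of \<open>t\<close>. Finally \<open>x + y = Z\<close> is not divisible by \<open>1 + i\<close>, which forces
  \<open>1 + i\<close> to divide \<open>x y = -W\<^sup>2\<close>, hence \<open>P Q\<close>.
\<close>

section \<open>Arithmetic of Gaussian integers\<close>

lemma gauss_int_iff: "z \<in> gauss_int \<longleftrightarrow> (\<exists>a b::int. z = Complex (of_int a) (of_int b))"
proof
  assume "z \<in> gauss_int"
  then obtain a b :: int where "Re z = of_int a" "Im z = of_int b"
    unfolding gauss_int_def by (auto elim!: Ints_cases)
  then show "\<exists>a b::int. z = Complex (of_int a) (of_int b)"
    by (intro exI) (simp add: complex_eq_iff)
qed (auto simp: gauss_int_def)

lemma gauss_int_add: "a \<in> gauss_int \<Longrightarrow> b \<in> gauss_int \<Longrightarrow> a + b \<in> gauss_int"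
  and gauss_int_diff: "a \<in> gauss_int \<Longrightarrow> b \<in> gauss_int \<Longrightarrow> a - b \<in> gauss_int"
  and gauss_int_minus: "a \<in> gauss_int \<Longrightarrow> - a \<in> gauss_int"
  and gauss_int_mult: "a \<in> gauss_int \<Longrightarrow> b \<in> gauss_int \<Longrightarrow> a * b \<in> gauss_int"
  unfolding gauss_int_def by simp_all

lemma gauss_int_simps [simp]: "0 \<in> gauss_int" "1 \<in> gauss_int" "\<i> \<in> gauss_int" "1 + \<i> \<in> gauss_int"
  unfolding gauss_int_def by simp_all

lemma gauss_int_power: "a \<in> gauss_int \<Longrightarrow> a ^ n \<in> gauss_int"
  by (induction n) (simp_all add: gauss_int_mult)

lemma gauss_int_prod: "(\<And>x. x \<in> A \<Longrightarrow> f x \<in> gauss_int) \<Longrightarrow> prod f A \<in> gauss_int"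
  by (induction A rule: infinite_finite_induct) (simp_all add: gauss_int_mult)

lemma gunits_gauss_int: "u \<in> gunits \<Longrightarrow> u \<in> gauss_int"
  unfolding gunits_def using gauss_int_minus by auto

lemma gdvdI: "c \<in> gauss_int \<Longrightarrow> b = a * c \<Longrightarrow> a gdvd b"
  unfolding gdvd_def by blast

lemma gdvdE: assumes "a gdvd b" obtains c where "c \<in> gauss_int" "b = a * c"
  using assms unfolding gdvd_def by blast

lemma gdvd_refl: "a gdvd a"
  by (rule gdvdI[of 1]) simp_all

lemma gdvd_triv_left: "b \<in> gauss_int \<Longrightarrow> a gdvd a * b"
  by (rule gdvdI[of b]) simp_all

lemma gdvd_trans: "a gdvd b \<Longrightarrow> b gdvd c \<Longrightarrow> a gdvd c"
  unfolding gdvd_def by (metis gauss_int_mult mult.assoc)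

lemma gdvd_mult_right: "a gdvd b \<Longrightarrow> c \<in> gauss_int \<Longrightarrow> a gdvd b * c"
  unfolding gdvd_def by (metis gauss_int_mult mult.assoc)

lemma gdvd_mult_left: "a gdvd b \<Longrightarrow> c \<in> gauss_int \<Longrightarrow> a gdvd c * b"
  using gdvd_mult_right[of a b c] by (simp add: mult.commute)

lemma gdvd_add: "a gdvd b \<Longrightarrow> a gdvd c \<Longrightarrow> a gdvd b + c"
  unfolding gdvd_def by (metis distrib_left gauss_int_add)

lemma gdvd_diff: "a gdvd b \<Longrightarrow> a gdvd c \<Longrightarrow> a gdvd b - c"
  unfolding gdvd_def by (metis right_diff_distrib gauss_int_diff)

lemma gdvd_minus_iff: "a gdvd - b \<longleftrightarrow> a gdvd b"
  unfolding gdvd_def by (metis gauss_int_minus minus_minus mult_minus_right)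

lemma gdvd_power_same: "a gdvd b \<Longrightarrow> a ^ n gdvd b ^ n"
  unfolding gdvd_def by (metis gauss_int_power power_mult_distrib)

lemma gdvd_mult_mono: "a gdvd b \<Longrightarrow> c * a gdvd c * b"
  unfolding gdvd_def by (metis mult.assoc)

lemma gdvd_mult_cancel_left: "a \<noteq> 0 \<Longrightarrow> a * b gdvd a * c \<Longrightarrow> b gdvd c"
  unfolding gdvd_def by (metis mult.assoc mult_left_cancel)

section \<open>Units and primes\<close>

lemma int_sum_squares_eq_1:
  fixes a b :: int
  assumes "a * a + b * b = 1"
  shows "(a = 1 \<or> a = -1) \<and> b = 0 \<or> a = 0 \<and> (b = 1 \<or> b = -1)"
proof -
  have "a * a \<le> 1" "b * b \<le> 1"
    using assms zero_le_square[of a] zero_le_square[of b] by linarith+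
  then have "\<bar>a\<bar> \<le> 1" "\<bar>b\<bar> \<le> 1"
    using abs_square_le_1[of a] abs_square_le_1[of b] by (simp_all add: power2_eq_square)
  then have "a \<in> {-1, 0, 1}" "b \<in> {-1, 0, 1}"
    by auto
  then show ?thesis
    using assms by auto
qed

lemma gauss_int_mult_eq_1_imp_unit:
  assumes "p \<in> gauss_int" "d \<in> gauss_int" "p * d = 1"
  shows "p \<in> gunits"
proof -
  obtain a b c e :: int where p: "p = Complex a b" and d: "d = Complex c e"
    using assms(1,2) gauss_int_iff by metis
  have "real_of_int (a * c - b * e) = 1" "real_of_int (a * e + b * c) = 0"
    using assms(3) unfolding p d by (auto simp: complex_eq_iff)
  then have h: "a * c - b * e = 1" "a * e + b * c = 0"
    by (simp_all only: of_int_eq_1_iff of_int_eq_0_iff)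
  \<comment> \<open>multiplicativity of the norm\<close>
  have "(a * a + b * b) * (c * c + e * e) = (a * c - b * e)\<^sup>2 + (a * e + b * c)\<^sup>2"
    by (simp add: algebra_simps power2_eq_square)
  then have "(a * a + b * b) * (c * c + e * e) = 1"
    using h by simp
  then have "a * a + b * b = 1"
    unfolding zmult_eq_1_iff using zero_le_square[of a] zero_le_square[of b] by linarith
  then show ?thesis
    unfolding p gunits_def by (auto dest!: int_sum_squares_eq_1 simp: complex_eq_iff)
qed

lemma gunits_inverse: "u \<in> gunits \<Longrightarrow> \<exists>v\<in>gunits. u * v = 1"
  unfolding gunits_def by (auto intro: bexI[of _ 1] bexI[of _ "-1"] bexI[of _ \<i>] bexI[of _ "-\<i>"])

lemma gauss_prime_gauss_int: "gauss_prime p \<Longrightarrow> p \<in> gauss_int"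
  unfolding gauss_prime_def by blast

lemma gauss_prime_gdvd_mult:
  "gauss_prime p \<Longrightarrow> a \<in> gauss_int \<Longrightarrow> b \<in> gauss_int \<Longrightarrow> p gdvd a * b \<Longrightarrow> p gdvd a \<or> p gdvd b"
  unfolding gauss_prime_def by blast

lemma gauss_prime_not_gdvd_1: "gauss_prime p \<Longrightarrow> \<not> p gdvd 1"
  unfolding gauss_prime_def gdvd_def using gauss_int_mult_eq_1_imp_unit by metis

lemma gauss_prime_gdvd_power:
  assumes "gauss_prime p" "q \<in> gauss_int" "p gdvd q ^ k"
  shows "p gdvd q"
  using assms(3)
proof (induction k)
  case (Suc k)
  then show ?case
    using gauss_prime_gdvd_mult[OF assms(1,2) gauss_int_power[OF assms(2)]] by auto
qed (use gauss_prime_not_gdvd_1 assms(1) in simp)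

lemma gauss_prime_gdvd_prod_power:
  assumes "gauss_prime p" "finite T" "\<forall>q\<in>T. q \<in> gauss_int" "p gdvd (\<Prod>q\<in>T. q ^ k q)"
  shows "\<exists>q\<in>T. p gdvd q"
  using assms(2-4)
proof (induction T rule: finite_induct)
  case (insert x F)
  have "x ^ k x \<in> gauss_int" "(\<Prod>q\<in>F. q ^ k q) \<in> gauss_int"
    using insert.prems(1) by (simp_all add: gauss_int_power gauss_int_prod)
  then have "p gdvd x ^ k x \<or> p gdvd (\<Prod>q\<in>F. q ^ k q)"
    using insert gauss_prime_gdvd_mult[OF assms(1)] by simp
  then show ?case
    using insert gauss_prime_gdvd_power[OF assms(1)] by blast
qed (use gauss_prime_not_gdvd_1 assms(1) in simp)

lemma gauss_prime_gdvd_prime_imp_associated: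
  assumes p: "gauss_prime p" and q: "gauss_prime q" and "p gdvd q"
  shows "\<exists>u\<in>gunits. q = p * u"
proof -
  obtain c where c: "c \<in> gauss_int" "q = p * c"
    using \<open>p gdvd q\<close> by (rule gdvdE)
  have "q \<noteq> 0" "p \<notin> gunits" "p \<in> gauss_int"
    using p q unfolding gauss_prime_def by auto
  have "q gdvd p \<or> q gdvd c"
    using gauss_prime_gdvd_mult[OF q \<open>p \<in> gauss_int\<close> c(1)] c(2) gdvd_refl by simp
  then show ?thesis
  proof
    assume "q gdvd p"
    then obtain d where "d \<in> gauss_int" "p = q * d" by (rule gdvdE)
    then have "c * d = 1"
      using c(2) \<open>q \<noteq> 0\<close> by (metis mult.left_commute mult_cancel_left1)
    then show ?thesis
      using c \<open>d \<in> gauss_int\<close> gauss_int_mult_eq_1_imp_unit by blast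
  next
    assume "q gdvd c"
    then obtain d where "d \<in> gauss_int" "c = q * d" by (rule gdvdE)
    then have "p * d = 1"
      using c(2) \<open>q \<noteq> 0\<close> by (metis mult.left_commute mult_cancel_left1)
    then have "p \<in> gunits"
      using \<open>p \<in> gauss_int\<close> \<open>d \<in> gauss_int\<close> gauss_int_mult_eq_1_imp_unit by blast
    with \<open>p \<notin> gunits\<close> show ?thesis by blast
  qed
qed

lemma gauss_prime_power_gdvd_mult_cancel:
  assumes p: "gauss_prime p" and x: "x \<in> gauss_int" and y: "y \<in> gauss_int"
    and "\<not> p gdvd y"
  shows "p ^ k gdvd x * y \<Longrightarrow> p ^ k gdvd x"
proof (induction k)
  case 0
  show ?case by (rule gdvdI[of x]) (simp_all add: x)
next
  case (Suc k)
  have "p \<in> gauss_int" "p \<noteq> 0"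
    using p unfolding gauss_prime_def by blast+
  have "p ^ k gdvd p ^ Suc k"
    unfolding power_Suc2 using \<open>p \<in> gauss_int\<close> by (rule gdvd_triv_left)
  then have "p ^ k gdvd x"
    using Suc gdvd_trans by blast
  then obtain m where m: "m \<in> gauss_int" "x = p ^ k * m" by (rule gdvdE)
  have "p ^ k * p gdvd p ^ k * (m * y)"
    using Suc.prems unfolding m(2) power_Suc2 by (simp only: mult.assoc)
  then have "p gdvd m * y"
    using gdvd_mult_cancel_left[OF power_not_zero[OF \<open>p \<noteq> 0\<close>]] by blast
  then have "p gdvd m"
    using gauss_prime_gdvd_mult[OF p m(1) y] \<open>\<not> p gdvd y\<close> by blast
  then show ?case
    unfolding m(2) power_Suc2 by (rule gdvd_mult_mono)
qed

lemma prod_prime_powers_gdvd: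
  assumes "finite T" "\<forall>p\<in>T. gauss_prime p" "\<forall>p\<in>T. \<forall>q\<in>T. p gdvd q \<longrightarrow> p = q"
    "x \<in> gauss_int" "\<forall>p\<in>T. p ^ k p gdvd x"
  shows "(\<Prod>p\<in>T. p ^ k p) gdvd x"
  using assms
proof (induction T rule: finite_induct)
  case empty
  then show ?case by (intro gdvdI[of x]) simp_all
next
  case (insert p F)
  have p: "gauss_prime p"
    using insert.prems(1) by blast
  have F: "\<forall>q\<in>F. q \<in> gauss_int"
    using insert.prems(1) gauss_prime_gauss_int by blast
  have "(\<Prod>q\<in>F. q ^ k q) gdvd x"
    by (rule insert.IH) (use insert.prems in blast)+
  then obtain m where m: "m \<in> gauss_int" "x = m * (\<Prod>q\<in>F. q ^ k q)"
    by (auto elim: gdvdE simp: mult.commute)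
  have "\<not> p gdvd (\<Prod>q\<in>F. q ^ k q)"
    using gauss_prime_gdvd_prod_power[OF p insert(1) F] insert.prems(2) insert(2) by blast
  moreover have "p ^ k p gdvd m * (\<Prod>q\<in>F. q ^ k q)"
    using insert.prems(4) m(2) by simp
  moreover have "(\<Prod>q\<in>F. q ^ k q) \<in> gauss_int"
    using F by (simp add: gauss_int_prod gauss_int_power)
  ultimately have "p ^ k p gdvd m"
    using gauss_prime_power_gdvd_mult_cancel[OF p m(1)] by blast
  then show ?case
    using insert(1,2) m(2) gdvd_mult_mono[of "p ^ k p" m "\<Prod>q\<in>F. q ^ k q"] by (simp add: mult.commute)
qed

section \<open>The prime \<open>1 + i\<close> and the set \<open>O\<^sup>I\<close>\<close>

lemma one_plus_i_gdvd_iff: "(1 + \<i>) gdvd Complex (of_int a) (of_int b) \<longleftrightarrow> even (a + b)"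
proof
  assume "(1 + \<i>) gdvd Complex (of_int a) (of_int b)"
  then obtain e f :: int where "Complex (of_int a) (of_int b) = (1 + \<i>) * Complex e f"
    by (metis gdvdE gauss_int_iff)
  then have "real_of_int a = real_of_int (e - f)" "real_of_int b = real_of_int (e + f)"
    by (simp_all add: complex_eq_iff)
  then have "a + b = 2 * e"
    by (simp only: of_int_eq_iff)
  then show "even (a + b)" by simp
next
  assume "even (a + b)"
  then obtain k where "a + b = 2 * k" by blast
  then have "Complex (of_int a) (of_int b) = (1 + \<i>) * Complex (of_int k) (of_int (k - a))"
    by (simp add: complex_eq_iff)
  then show "(1 + \<i>) gdvd Complex (of_int a) (of_int b)"
    by (intro gdvdI) (auto simp: gauss_int_def)
qed

lemma one_plus_i_gdvd_add:
  assumes "a \<in> gauss_int" "b \<in> gauss_int" "\<not> (1 + \<i>) gdvd a" "\<not> (1 + \<i>) gdvd b"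
  shows "(1 + \<i>) gdvd a + b"
proof -
  obtain a1 a2 b1 b2 :: int where ab: "a = Complex a1 a2" "b = Complex b1 b2"
    using assms(1,2) gauss_int_iff by metis
  then have "odd (a1 + a2)" "odd (b1 + b2)"
    using assms(3,4) one_plus_i_gdvd_iff by simp_all
  then have "even ((a1 + b1) + (a2 + b2))"
    by presburger
  moreover have "a + b = Complex (of_int (a1 + b1)) (of_int (a2 + b2))"
    using ab by (simp add: complex_eq_iff)
  ultimately show ?thesis
    by (simp only: one_plus_i_gdvd_iff)
qed

lemma gauss_prime_one_plus_i: "gauss_prime (1 + \<i>)"
  unfolding gauss_prime_def
proof (intro conjI ballI impI)
  show "1 + \<i> \<notin> gunits" "1 + \<i> \<noteq> 0"
    unfolding gunits_def by (auto simp: complex_eq_iff)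
  fix x y assume "x \<in> gauss_int" "y \<in> gauss_int" "(1 + \<i>) gdvd x * y"
  then obtain a b c e :: int where xy: "x = Complex a b" "y = Complex c e"
    using gauss_int_iff by metis
  then have "x * y = Complex (of_int (a * c - b * e)) (of_int (a * e + b * c))"
    by (simp add: complex_eq_iff)
  then have "even ((a * c - b * e) + (a * e + b * c))"
    using \<open>(1 + \<i>) gdvd x * y\<close> by (simp only: one_plus_i_gdvd_iff)
  moreover have "(a * c - b * e) + (a * e + b * c) = (a + b) * (c + e) - 2 * (b * e)"
    by (simp add: algebra_simps)
  ultimately have "even (a + b) \<or> even (c + e)"
    by simp
  then show "(1 + \<i>) gdvd x \<or> (1 + \<i>) gdvd y"
    unfolding xy one_plus_i_gdvd_iff .
qed simp

lemma gOI_iff: "Complex (of_int a) (of_int b) \<in> gOI \<longleftrightarrow> (a + b) mod 2 = 1 \<and> a mod 4 = 1"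
  unfolding gOI_def gO_def gauss_int_def by simp

lemma gOI_cases:
  assumes "z \<in> gOI"
  obtains a b :: int where "z = Complex (of_int a) (of_int b)" "a mod 4 = 1" "even b"
proof -
  obtain a b :: int where z: "z = Complex (of_int a) (of_int b)"
    using assms gauss_int_iff unfolding gOI_def gO_def by auto
  then have "(a + b) mod 2 = 1 \<and> a mod 4 = 1"
    using assms gOI_iff by simp
  then have "a mod 4 = 1" "even b" by presburger+
  then show ?thesis using z that by blast
qed

lemma gOI_not_one_plus_i_gdvd: "z \<in> gOI \<Longrightarrow> \<not> (1 + \<i>) gdvd z"
  by (erule gOI_cases) (simp only: one_plus_i_gdvd_iff; presburger)

lemma gOI_mult_unit:
  assumes "p \<in> gOI" "u \<in> gunits" "p * u \<in> gOI"
  shows "u = 1"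
proof -
  obtain a b :: int where p: "p = Complex (of_int a) (of_int b)" "a mod 4 = 1" "even b"
    using assms(1) by (rule gOI_cases)
  have "p * (-1) = Complex (of_int (-a)) (of_int (-b))"
    "p * \<i> = Complex (of_int (-b)) (of_int a)"
    "p * (-\<i>) = Complex (of_int b) (of_int (-a))"
    using p by (simp_all add: complex_eq_iff)
  then have "u = -1 \<Longrightarrow> (- a) mod 4 = 1" "u = \<i> \<Longrightarrow> (- b) mod 4 = 1" "u = -\<i> \<Longrightarrow> b mod 4 = 1"
    using assms(3) gOI_iff by metis+
  moreover have "\<not> (- a) mod 4 = 1" "\<not> (- b) mod 4 = 1" "\<not> b mod 4 = 1"
    using p by presburger+
  ultimately show ?thesis
    using assms(2) unfolding gunits_def by blast
qed

section \<open>Factorisation of elements of \<open>G\<close>\<close>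

definition gG_primes :: "complex set" where
  "gG_primes = insert (1 + \<i>) {p. gauss_prime p \<and> p \<in> gOI}"

lemma gG_primes_gauss_prime: "p \<in> gG_primes \<Longrightarrow> gauss_prime p"
  unfolding gG_primes_def using gauss_prime_one_plus_i by blast

lemma gG_primes_gdvd_imp_eq:
  assumes "p \<in> gG_primes" "q \<in> gG_primes" "p gdvd q"
  shows "p = q"
proof -
  obtain u where u: "u \<in> gunits" "q = p * u"
    using gauss_prime_gdvd_prime_imp_associated assms gG_primes_gauss_prime by blast
  obtain v where v: "v \<in> gunits" "u * v = 1"
    using gunits_inverse u(1) by blast
  have "q gdvd p"
    using u(2) v gunits_gauss_int by (intro gdvdI[of v]) (simp_all add: mult.assoc)
  consider "p = 1 + \<i>" "q = 1 + \<i>" | "p = 1 + \<i>" "q \<in> gOI" | "p \<in> gOI" "q = 1 + \<i>"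
    | "p \<in> gOI" "q \<in> gOI"
    using assms(1,2) unfolding gG_primes_def by blast
  then show ?thesis
  proof cases
    case 4
    then show ?thesis using gOI_mult_unit u by simp
  qed (use gOI_not_one_plus_i_gdvd assms(3) \<open>q gdvd p\<close> in auto)
qed

lemma gG_iff_prod:
  "z \<in> gG \<longleftrightarrow> (\<exists>T e. finite T \<and> T \<subseteq> gG_primes \<and> z = (\<Prod>p\<in>T. p ^ e p))"
proof
  assume "z \<in> gG"
  then obtain a S e where S: "finite S" "\<forall>p\<in>S. gauss_prime p \<and> p \<in> gOI"
    and z: "z = (1 + \<i>) ^ a * (\<Prod>p\<in>S. p ^ e p)"
    unfolding gG_def by blast
  have "1 + \<i> \<notin> S"
    using S(2) gOI_not_one_plus_i_gdvd gdvd_refl by blast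
  then have "(\<Prod>p\<in>S. p ^ (e(1 + \<i> := a)) p) = (\<Prod>p\<in>S. p ^ e p)"
    by (intro prod.cong) auto
  then have "(\<Prod>p\<in>insert (1 + \<i>) S. p ^ (e(1 + \<i> := a)) p) = z"
    using S(1) \<open>1 + \<i> \<notin> S\<close> unfolding z by simp
  moreover have "insert (1 + \<i>) S \<subseteq> gG_primes"
    using S(2) unfolding gG_primes_def by blast
  ultimately show "\<exists>T e. finite T \<and> T \<subseteq> gG_primes \<and> z = (\<Prod>p\<in>T. p ^ e p)"
    using S(1) by (metis finite_insert)
next
  assume "\<exists>T e. finite T \<and> T \<subseteq> gG_primes \<and> z = (\<Prod>p\<in>T. p ^ e p)"
  then obtain T e where T: "finite T" "T \<subseteq> gG_primes" and z: "z = (\<Prod>p\<in>T. p ^ e p)"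
    by blast
  define S where "S = T - {1 + \<i>}"
  define a where "a = (if 1 + \<i> \<in> T then e (1 + \<i>) else 0)"
  have "z = (1 + \<i>) ^ a * (\<Prod>p\<in>S. p ^ e p)"
    unfolding z S_def a_def using T(1) by (simp add: prod.remove)
  moreover have "finite S" "\<forall>p\<in>S. gauss_prime p \<and> p \<in> gOI"
    using T unfolding S_def gG_primes_def by auto
  ultimately show "z \<in> gG"
    unfolding gG_def by blast
qed

lemma gG_gauss_int: "z \<in> gG \<Longrightarrow> z \<in> gauss_int"
  unfolding gG_iff_prod
  by (auto intro!: gauss_int_prod gauss_int_power dest: gG_primes_gauss_prime gauss_prime_gauss_int)

lemma gG_nonzero: "z \<in> gG \<Longrightarrow> z \<noteq> 0"
  using gG_primes_gauss_prime unfolding gG_iff_prod gauss_prime_def by (force simp: prod_zero_iff)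

lemma prod_gG_primes_square_gdvd:
  assumes T0: "finite T0" "T0 \<subseteq> gG_primes" and "T \<subseteq> T0"
    and "x \<in> gauss_int" "y \<in> gauss_int" "c \<in> gauss_int"
    and xy: "x * y = c * (\<Prod>q\<in>T0. q ^ e q)\<^sup>2"
    and "\<forall>q\<in>T. \<not> q gdvd y"
  shows "(\<Prod>q\<in>T. q ^ e q)\<^sup>2 gdvd x"
proof -
  have T0_int: "\<And>q. q \<in> T0 \<Longrightarrow> q \<in> gauss_int"
    using T0(2) gG_primes_gauss_prime gauss_prime_gauss_int by blast
  have "(\<Prod>q\<in>T. q ^ e q)\<^sup>2 = (\<Prod>q\<in>T. q ^ (e q * 2))"
    by (simp add: prod_power_distrib power_mult)
  also have "\<dots> gdvd x"
  proof (rule prod_prime_powers_gdvd)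
    have "T \<subseteq> gG_primes"
      using T0(2) \<open>T \<subseteq> T0\<close> by blast
    then show "finite T" "\<forall>p\<in>T. gauss_prime p" "\<forall>p\<in>T. \<forall>q\<in>T. p gdvd q \<longrightarrow> p = q"
      using finite_subset[OF \<open>T \<subseteq> T0\<close> T0(1)] gG_primes_gauss_prime gG_primes_gdvd_imp_eq
      by blast+
    show "\<forall>q\<in>T. q ^ (e q * 2) gdvd x"
    proof
      fix q assume "q \<in> T"
      then have "q \<in> T0" using \<open>T \<subseteq> T0\<close> by blast
      have "(\<Prod>r\<in>T0 - {q}. r ^ e r) \<in> gauss_int"
        using T0_int by (auto intro!: gauss_int_prod gauss_int_power)
      then have "q ^ e q gdvd (\<Prod>r\<in>T0. r ^ e r)"
        using prod.remove[OF T0(1) \<open>q \<in> T0\<close>] by (rule gdvdI)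
      then have "q ^ (e q * 2) gdvd x * y"
        unfolding xy power_mult by (intro gdvd_mult_left gdvd_power_same \<open>c \<in> gauss_int\<close>)
      moreover have "gauss_prime q"
        using T0(2) \<open>q \<in> T0\<close> gG_primes_gauss_prime by blast
      ultimately show "q ^ (e q * 2) gdvd x"
        using gauss_prime_power_gdvd_mult_cancel assms(4,5,8) \<open>q \<in> T\<close> by blast
    qed
  qed fact
  finally show ?thesis .
qed

lemma gG_square_split:
  assumes "W \<in> gG" "x \<in> gauss_int" "y \<in> gauss_int" "c \<in> gauss_int" "x * y = c * W\<^sup>2"
    and coprime: "\<forall>p. gauss_prime p \<longrightarrow> \<not> (p gdvd x \<and> p gdvd y)"
  shows "\<exists>P Q. P \<in> gG \<and> Q \<in> gG \<and> W = P * Q \<and> P\<^sup>2 gdvd x \<and> Q\<^sup>2 gdvd y \<and> coprime_G P Q"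
proof -
  obtain T0 e where T0: "finite T0" "T0 \<subseteq> gG_primes" and W: "W = (\<Prod>q\<in>T0. q ^ e q)"
    using \<open>W \<in> gG\<close> gG_iff_prod by blast
  define P where "P = (\<Prod>q\<in>{q\<in>T0. q gdvd x}. q ^ e q)"
  define Q where "Q = (\<Prod>q\<in>{q\<in>T0. \<not> q gdvd x}. q ^ e q)"
  have "W = P * Q"
    unfolding W P_def Q_def using T0(1) by (subst prod.union_disjoint[symmetric]) (auto intro: prod.cong)
  moreover have "P \<in> gG" "Q \<in> gG"
    unfolding P_def Q_def gG_iff_prod using T0
    by (metis (no_types, lifting) finite_subset mem_Collect_eq subsetI subset_trans)+
  moreover have P: "P\<^sup>2 gdvd x"
    unfolding P_def using assms(2-5) coprime gG_primes_gauss_prime T0(2)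
    by (intro prod_gG_primes_square_gdvd[OF T0, of _ x y c e]) (auto simp: W)
  moreover have Q: "Q\<^sup>2 gdvd y"
    unfolding Q_def using assms(2-5)
    by (intro prod_gG_primes_square_gdvd[OF T0, of _ y x c e]) (auto simp: W mult.commute)
  moreover have "coprime_G P Q"
    unfolding coprime_G_def
  proof
    assume "\<exists>p. gauss_prime p \<and> p gdvd P \<and> p gdvd Q"
    then obtain p where p: "gauss_prime p" "p gdvd P" "p gdvd Q" by blast
    have "P gdvd P\<^sup>2" "Q gdvd Q\<^sup>2"
      using \<open>P \<in> gG\<close> \<open>Q \<in> gG\<close> unfolding power2_eq_square by (simp_all add: gdvd_triv_left gG_gauss_int)
    then show False
      using coprime p P Q gdvd_trans by blast
  qed
  ultimately show ?thesis by blast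
qed

section \<open>Pythagorean triples\<close>

lemma gOI_half_sum_diff:
  assumes "X \<in> gOI" "Z \<in> gOI"
  obtains x y where "x \<in> gauss_int" "y \<in> gauss_int" "X = x - y" "Z = x + y"
proof -
  obtain a1 b1 :: int where X: "X = Complex a1 b1" "a1 mod 4 = 1" "even b1"
    using assms(1) by (rule gOI_cases)
  obtain a2 b2 :: int where Z: "Z = Complex a2 b2" "a2 mod 4 = 1" "even b2"
    using assms(2) by (rule gOI_cases)
  have "even (a2 + a1)" "even (b2 + b1)" "even (a2 - a1)" "even (b2 - b1)"
    using X(2,3) Z(2,3) by presburger+
  then obtain k1 k2 k3 k4 where k: "a2 + a1 = 2 * k1" "b2 + b1 = 2 * k2" "a2 - a1 = 2 * k3" "b2 - b1 = 2 * k4"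
    by (metis evenE)
  have "real_of_int (a2 + a1) = real_of_int (2 * k1)" "real_of_int (b2 + b1) = real_of_int (2 * k2)"
    "real_of_int (a2 - a1) = real_of_int (2 * k3)" "real_of_int (b2 - b1) = real_of_int (2 * k4)"
    using k by simp_all
  then have "X = Complex k1 k2 - Complex k3 k4" "Z = Complex k1 k2 + Complex k3 k4"
    unfolding X Z by (simp_all add: complex_eq_iff)
  then show ?thesis
    using that gauss_int_iff by blast
qed

lemma pythagorean_halves_coprime:
  assumes "X \<in> gauss_int" "Y \<in> gauss_int" "Z \<in> gauss_int" "X\<^sup>2 + Y\<^sup>2 = Z\<^sup>2" "gcd_unit X Y"
    and "X = x - y" "Z = x + y" "gauss_prime p"
  shows "\<not> (p gdvd x \<and> p gdvd y)"
proof
  assume "p gdvd x \<and> p gdvd y"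
  then have pX: "p gdvd X" and pZ: "p gdvd Z"
    using assms(6,7) gdvd_add gdvd_diff by blast+
  have "Y * Y = Z * Z - X * X"
    using assms(4) by (simp add: power2_eq_square algebra_simps)
  then have "p gdvd Y * Y"
    using gdvd_diff[OF gdvd_mult_right[OF pZ assms(3)] gdvd_mult_right[OF pX assms(1)]] by simp
  then have "p gdvd Y"
    using gauss_prime_gdvd_mult[OF assms(8,2,2)] by blast
  then have "p \<in> gunits"
    using assms(5,8) pX gauss_prime_gauss_int unfolding gcd_unit_def by blast
  with \<open>gauss_prime p\<close> show False
    unfolding gauss_prime_def by blast
qed

lemma gunits_eq_powers: "gunits = (\<lambda>t. \<i> ^ (t + 1)) ` {..3::nat}"
  by (auto simp: gunits_def numeral_eq_Suc atMost_Suc)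

lemma gunits_mult_eq_minus_1:
  assumes "r \<in> gunits" "r * s = -1"
  shows "\<exists>t::nat. t \<le> 3 \<and> r = \<i> ^ (t + 1) \<and> s = (-1) ^ t * \<i> ^ (t + 1)"
proof -
  obtain t :: nat where t: "t \<le> 3" "r = \<i> ^ (t + 1)"
    using assms(1) unfolding gunits_eq_powers by auto
  then have "r * ((-1) ^ t * \<i> ^ (t + 1)) = r * s"
    using assms(2) by (auto simp: le_Suc_eq numeral_eq_Suc)
  moreover have "r \<noteq> 0"
    using assms(2) by auto
  ultimately show ?thesis
    using t by auto
qed

lemma coprime_mult_eq_minus_gG_square:
  assumes "W \<in> gG" "x \<in> gauss_int" "y \<in> gauss_int" "x * y = - W\<^sup>2"
    and "\<forall>p. gauss_prime p \<longrightarrow> \<not> (p gdvd x \<and> p gdvd y)"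
  shows "\<exists>(t::nat) P Q. t \<le> 3 \<and> P \<in> gG \<and> Q \<in> gG \<and> coprime_G P Q \<and> W = P * Q \<and>
           x = \<i> ^ (t + 1) * P\<^sup>2 \<and> y = (-1) ^ t * \<i> ^ (t + 1) * Q\<^sup>2"
proof -
  obtain P Q where PQ: "P \<in> gG" "Q \<in> gG" "W = P * Q" "coprime_G P Q"
    and "P\<^sup>2 gdvd x" "Q\<^sup>2 gdvd y"
    using gG_square_split[of W x y "-1"] assms gauss_int_minus[of 1] by auto
  then obtain r s where r: "r \<in> gauss_int" "x = P\<^sup>2 * r" and s: "s \<in> gauss_int" "y = Q\<^sup>2 * s"
    by (meson gdvdE)
  have "(r * s) * W\<^sup>2 = -1 * W\<^sup>2"
    using assms(4) unfolding r(2) s(2) PQ(3) by (simp add: power_mult_distrib algebra_simps)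
  moreover have "W \<noteq> 0"
    using assms(1) by (rule gG_nonzero)
  ultimately have "r * s = -1"
    by (metis mult_cancel_right power_not_zero)
  then obtain t where "t \<le> 3" "r = \<i> ^ (t + 1)" "s = (-1) ^ t * \<i> ^ (t + 1)"
    using gunits_mult_eq_minus_1 gauss_int_mult_eq_1_imp_unit[OF r(1) gauss_int_minus[OF s(1)]] by auto
  then show ?thesis
    using PQ r(2) s(2) by (intro exI[of _ t] exI[of _ P] exI[of _ Q]) (simp add: mult.commute)
qed

lemma one_plus_i_gdvd_of_mult_eq_minus_square:
  assumes "x \<in> gauss_int" "y \<in> gauss_int" "x + y \<in> gOI" "W \<in> gauss_int" "x * y = - W\<^sup>2"
  shows "(1 + \<i>) gdvd W"
proof -
  have "(1 + \<i>) gdvd x \<or> (1 + \<i>) gdvd y"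
    using one_plus_i_gdvd_add[OF assms(1,2)] gOI_not_one_plus_i_gdvd[OF assms(3)] by blast
  then have "(1 + \<i>) gdvd W ^ 2"
    using assms gdvd_mult_left gdvd_mult_right gdvd_minus_iff by metis
  then show ?thesis
    by (rule gauss_prime_gdvd_power[OF gauss_prime_one_plus_i assms(4)])
qed

theorem theorem4p4:
  fixes X Y Z :: complex
  assumes "X \<in> gauss_int" and "Y \<in> gauss_int" and "Z \<in> gauss_int"
    and "X\<^sup>2 + Y\<^sup>2 = Z\<^sup>2"
    and "gcd_unit X Y"
    and "X * Y * Z \<noteq> 0"
    and "X \<in> gOI" and "Z \<in> gOI"
    and "\<exists>W\<in>gG. Y = (1 + \<i>)\<^sup>2 * W"
  shows "\<exists>(t::nat) P Q. t \<le> 3 \<and> P \<in> gG \<and> Q \<in> gG \<and> coprime_G P Q \<and>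
           (1 + \<i>) gdvd (P * Q) \<and>
           X = \<i> ^ (t + 1) * (P\<^sup>2 - (-1) ^ t * Q\<^sup>2) \<and>
           Y = (1 + \<i>)\<^sup>2 * P * Q \<and>
           Z = \<i> ^ (t + 1) * (P\<^sup>2 + (-1) ^ t * Q\<^sup>2)"
proof -
  obtain W where "W \<in> gG" and Y: "Y = (1 + \<i>)\<^sup>2 * W"
    using assms(9) by blast
  obtain x y where xy: "x \<in> gauss_int" "y \<in> gauss_int" "X = x - y" "Z = x + y"
    using assms(7,8) by (rule gOI_half_sum_diff)
  \<comment> \<open>\<open>4 x y = Z\<^sup>2 - X\<^sup>2 = Y\<^sup>2\<close> and \<open>(1 + i)\<^sup>2 = 2 i\<close>\<close>
  have "x * y = - W\<^sup>2"
    using assms(4) unfolding Y xy by (simp add: power2_eq_square algebra_simps complex_eq_iff)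
  moreover have "\<forall>p. gauss_prime p \<longrightarrow> \<not> (p gdvd x \<and> p gdvd y)"
    using pythagorean_halves_coprime[OF assms(1-5) xy(3,4)] by blast
  ultimately obtain t P Q where "t \<le> 3" "P \<in> gG" "Q \<in> gG" "coprime_G P Q" "W = P * Q"
    "x = \<i> ^ (t + 1) * P\<^sup>2" "y = (-1) ^ t * \<i> ^ (t + 1) * Q\<^sup>2"
    using coprime_mult_eq_minus_gG_square[OF \<open>W \<in> gG\<close> xy(1,2)] by blast
  moreover have "(1 + \<i>) gdvd W"
    using one_plus_i_gdvd_of_mult_eq_minus_square xy assms(8) gG_gauss_int \<open>W \<in> gG\<close>
      \<open>x * y = - W\<^sup>2\<close> by blast
  ultimately show ?thesis
    unfolding xy(3,4) Y by (intro exI[of _ t] exI[of _ P] exI[of _ Q]) (simp add: algebra_simps)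
qed

end
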